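(* Let $f:\mathbb R\to\mathbb R$ be a Jones function and let $\varphi:\mathbb R\to\mathbb R$ be continuous and surjective. Then $\varphi\circ f$ is a Jones function.
   Context: A function $f:\mathbb R\to\mathbb R$ (identified with its graph in $\mathbb R^2$) is a Jones function if for every closed set $K\subset\mathbb R^2$ whose projection onto the $x$-axis, $\{x:\exists y,\ (x,y)\in K\}$, is uncountable, the graph of $f$ meets $K$. *)

theory Defs
  imports "HOL-Analysis.Analysis"
begin

definition jones_function :: "(real \<Rightarrow> real) \<Rightarrow> bool" where
  "jones_function f \<longleftrightarrow>
     (\<forall>K :: (real \<times> real) set. closed K \<and> uncountable (fst ` K)
        \<longrightarrow> (\<exists>x. (x, f x) \<in> K))"

end

theory Submission
  imports Defs
begin

text \<open>Pull a closed set K back along the continuous map (x, y) \<mapsto> (x, \<phi> y). The preimage is closed,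
  and since \<phi> is surjective it has the same projection onto the x-axis as K; a point of the graph
  of f in the preimage is a point of the graph of \<phi> \<circ> f in K.\<close>

lemma closed_vimage_map_prod_id:
  fixes \<phi> :: "'b::topological_space \<Rightarrow> 'c::topological_space"
  assumes "continuous_on UNIV \<phi>" and "closed K"
  shows "closed (map_prod id \<phi> -` K)"
proof -
  have "continuous_on UNIV (map_prod id \<phi> :: 'a::topological_space \<times> 'b \<Rightarrow> 'a \<times> 'c)"
    unfolding map_prod_def case_prod_beta id_def
    by (intro continuous_intros continuous_on_compose2[OF assms(1)]) auto
  then show ?thesis
    using assms(2) by (simp add: closed_vimage continuous_on_eq_continuous_at)
qed

lemma fst_image_vimage_map_prod_id:
  assumes "surj \<phi>"
  shows "fst ` (map_prod id \<phi> -` K) = fst ` K"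
proof
  show "fst ` (map_prod id \<phi> -` K) \<subseteq> fst ` K"
    by (force simp: map_prod_def)
  show "fst ` K \<subseteq> fst ` (map_prod id \<phi> -` K)"
  proof
    fix x assume "x \<in> fst ` K"
    then obtain z where "(x, z) \<in> K" by force
    moreover obtain y where "\<phi> y = z" using assms by (metis surjD)
    ultimately have "(x, y) \<in> map_prod id \<phi> -` K" by simp
    then show "x \<in> fst ` (map_prod id \<phi> -` K)" by (metis fst_conv image_eqI)
  qed
qed

theorem proposition4p1:
  fixes f \<phi> :: "real \<Rightarrow> real"
  assumes "jones_function f"
    and "continuous_on UNIV \<phi>"
    and "surj \<phi>"
  shows "jones_function (\<phi> \<circ> f)"
  unfolding jones_function_def
proof (intro allI impI)
  fix K :: "(real \<times> real) set"
  assume K: "closed K \<and> uncountable (fst ` K)"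
  let ?L = "map_prod id \<phi> -` K"
  have "closed ?L"
    using closed_vimage_map_prod_id[OF assms(2)] K by blast
  moreover have "uncountable (fst ` ?L)"
    using fst_image_vimage_map_prod_id[OF assms(3)] K by metis
  ultimately obtain x where "(x, f x) \<in> ?L"
    using assms(1) unfolding jones_function_def by blast
  then show "\<exists>x. (x, (\<phi> \<circ> f) x) \<in> K" by auto
qed

end
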